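(* Consider the Lur'e system described in the context, with $x(0)=0$, and let $\bar y\in\mathbf{R}^m$ be a given output constraint. Suppose there exist $\bar u\in\mathbf{R}^n$, $\bar u\ge0$, and $\bar z\in\mathbf{R}^\ell$, $\bar z>0$, such that $$\gamma_{z,u}\bar u<(I-\gamma_{z,v}\gamma_\psi(\bar z))\bar z,\qquad \gamma_{y,u}\bar u+\gamma_{y,v}\gamma_\psi(\bar z)\bar z\le\bar y.$$ Then the system is CICO stable: every input $u$ with $\lvert u\rvert_{\mathcal{L}_\infty^n}\le\bar u$ produces $\lvert z\rvert_{\mathcal{L}_\infty^\ell}\le\bar z$ and $\lvert y\rvert_{\mathcal{L}_\infty^m}\le\bar y$.
   Context: Lur'e system: matrices $A\in\mathbf{R}^{N\times N}$, $B_u\in\mathbf{R}^{N\times n}$, $B_v\in\mathbf{R}^{N\times\ell}$, $C_y\in\mathbf{R}^{m\times N}$, $C_z\in\mathbf{R}^{\ell\times N}$, and $\varphi^*\in\mathbf{R}^\ell$ are given; the dynamics are $\dot x=Ax+B_v v+B_u u$, $y=C_y x$, $z=C_z x$, $v=\psi(z)$ with $\psi_i(z_i)=\sin(\varphi^*_i+z_i)-\sin\varphi^*_i-\cos(\varphi^*_i)z_i$, input $u:[0,\infty)\to\mathbf{R}^n$ measurable. It is assumed that for $i\in\{y,z\}$, $j\in\{u,v\}$ the impulse response $h^{i,j}(t)=C_ie^{At}B_j$ ($t\ge0$) has absolutely integrable entries; the gain matrices $\gamma_{i,j}$ have entries $[\gamma_{i,j}]_{pq}=\int_0^\infty|h^{i,j}_{pq}(\tau)|d\tau$.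 For $\bar z>0$, $\gamma_\psi(\bar z)$ is the diagonal matrix with $\gamma_{\psi,ii}(\bar z_i)=\sup_{0<|z_i|\le\bar z_i}\left|\frac{\sin(\varphi^*_i+z_i)-\sin\varphi^*_i}{z_i}-\cos\varphi^*_i\right|$. The element-wise $\mathcal{L}$-infinity norm $\lvert w\rvert_{\mathcal{L}_\infty^k}$ of $w:[0,\infty)\to\mathbf{R}^k$ has entries $\sup_{t\ge0}|w_i(t)|$. CICO stability: given $\bar y$, there exists $\bar u$ such that every input with $\lvert u\rvert_{\mathcal{L}_\infty^n}\le\bar u$ yields $\lvert y\rvert_{\mathcal{L}_\infty^m}\le\bar y$. Inequalities are componentwise. *)

theory Defs
  imports "HOL-Analysis.Analysis"
begin

primrec matpow :: "real^'n^'n \<Rightarrow> nat \<Rightarrow> real^'n^'n" where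
  "matpow M 0 = mat 1"
| "matpow M (Suc k) = M ** matpow M k"

definition mat_exp :: "real^'n^'n \<Rightarrow> real^'n^'n" where
  "mat_exp M = (\<Sum>k. (1 / fact k) *\<^sub>R matpow M k)"

definition impulse :: "real^'N^'i \<Rightarrow> real^'N^'N \<Rightarrow> real^'j^'N \<Rightarrow> real \<Rightarrow> real^'j^'i" where
  "impulse C A B t = C ** mat_exp (t *\<^sub>R A) ** B"

definition gain :: "real^'N^'i \<Rightarrow> real^'N^'N \<Rightarrow> real^'j^'N \<Rightarrow> real^'j^'i" where
  "gain C A B = (\<chi> p q. integral {0..} (\<lambda>t. \<bar>impulse C A B t $ p $ q\<bar>))"

definition psi :: "real^'l \<Rightarrow> real^'l \<Rightarrow> real^'l" where
  "psi phis z = (\<chi> i. sin (phis$i + z$i) - sin (phis$i) - cos (phis$i) * z$i)"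

definition gamma_psi :: "real^'l \<Rightarrow> real^'l \<Rightarrow> real^'l^'l" where
  "gamma_psi phis zbar = (\<chi> i j. if i = j then
      Sup {\<bar>(sin (phis$i + s) - sin (phis$i)) / s - cos (phis$i)\<bar> | s. 0 < \<bar>s\<bar> \<and> \<bar>s\<bar> \<le> zbar$i}
    else 0)"

definition linf :: "(real \<Rightarrow> real^'k) \<Rightarrow> 'k \<Rightarrow> ereal" where
  "linf w i = (SUP t\<in>{0..}. ereal \<bar>w t $ i\<bar>)"

definition linf_le :: "(real \<Rightarrow> real^'k) \<Rightarrow> real^'k \<Rightarrow> bool" where
  "linf_le w b \<longleftrightarrow> (\<forall>i. linf w i \<le> ereal (b $ i))"

(* Caratheodory solution on [0,\<infinity>) of the Lur'e system with x(0)=0 *)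
definition lure_solution ::
  "real^'N^'N \<Rightarrow> real^'n^'N \<Rightarrow> real^'l^'N \<Rightarrow> real^'N^'l \<Rightarrow> real^'l
   \<Rightarrow> (real \<Rightarrow> real^'n) \<Rightarrow> (real \<Rightarrow> real^'N) \<Rightarrow> bool" where
  "lure_solution A Bu Bv Cz phis u x \<longleftrightarrow>
     x 0 = 0 \<and>
     (\<forall>t\<ge>0. (\<lambda>s. A *v x s + Bv *v psi phis (Cz *v x s) + Bu *v u s) absolutely_integrable_on {0..t} \<and>
       ((\<lambda>s. A *v x s + Bv *v psi phis (Cz *v x s) + Bu *v u s) has_integral x t) {0..t})"

end

theory Submission
  imports Defs
begin

(* By variation of constants, z and y are convolutions of the impulse responses with the input u
   and the feedback signal v = psi(z). As long as |z| \<le> zbar, the sector bound gives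
   |v| \<le> gamma_psi(zbar) zbar, so the gain bound yields |z| \<le> gamma_zu ubar + gamma_zv gamma_psi(zbar) zbar,
   which is strictly below zbar by the first condition. Since z(0) = 0 and z is continuous,
   z can therefore never reach the boundary of the box; with |v| bounded for all time, the same
   gain bound and the second condition give |y| \<le> ybar. *)

lemma matpow_scaleR: "matpow (c *\<^sub>R M) k = c ^ k *\<^sub>R matpow M k"
proof (induction k)
  case 0
  show ?case by simp
next
  case (Suc k)
  have "matpow (c *\<^sub>R M) (Suc k) = (c *\<^sub>R M) ** (c ^ k *\<^sub>R matpow M k)"
    by (simp only: matpow.simps Suc)
  also have "\<dots> = (c * c ^ k) *\<^sub>R (M ** matpow M k)"
    by (simp only: scalar_matrix_assoc[symmetric] matrix_scalar_ac scaleR_scaleR mult.commute)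
  finally show ?case by simp
qed

lemma matpow_Suc_right: "matpow M (Suc k) = matpow M k ** M"
proof (induction k)
  case 0
  show ?case by (simp add: matrix_mul_lid matrix_mul_rid)
next
  case (Suc k)
  have "matpow M (Suc (Suc k)) = M ** (matpow M k ** M)"
    by (simp only: matpow.simps Suc[symmetric])
  then show ?case by (simp only: matrix_mul_assoc matpow.simps)
qed

definition mat_abs_sum :: "real^'n^'n \<Rightarrow> real" where
  "mat_abs_sum M = (\<Sum>a\<in>UNIV. \<Sum>b\<in>UNIV. \<bar>M $ a $ b\<bar>)"

lemma abs_matpow_entry_le: "\<bar>matpow M k $ i $ j\<bar> \<le> mat_abs_sum M ^ k"
proof (induction k arbitrary: i j)
  case 0
  then show ?case by (simp add: mat_def)
next
  case (Suc k)
  have row: "(\<Sum>l\<in>UNIV. \<bar>M $ i $ l\<bar>) \<le> mat_abs_sum M"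
    unfolding mat_abs_sum_def
    by (rule member_le_sum[where f="\<lambda>a. \<Sum>b\<in>UNIV. \<bar>M $ a $ b\<bar>"]) (auto intro: sum_nonneg)
  have "\<bar>matpow M (Suc k) $ i $ j\<bar> = \<bar>\<Sum>l\<in>UNIV. M $ i $ l * matpow M k $ l $ j\<bar>"
    by (simp only: matpow.simps matrix_matrix_mult_def vec_lambda_beta)
  also have "\<dots> \<le> (\<Sum>l\<in>UNIV. \<bar>M $ i $ l\<bar> * mat_abs_sum M ^ k)"
    by (rule order_trans[OF sum_abs sum_mono]) (simp only: abs_mult mult_left_mono Suc abs_ge_zero)
  also have "\<dots> \<le> mat_abs_sum M * mat_abs_sum M ^ k"
    unfolding sum_distrib_right[symmetric]
    by (intro mult_right_mono row zero_le_power) (simp add: mat_abs_sum_def sum_nonneg)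
  finally show ?case by (simp only: power_Suc)
qed

lemma summable_matpow_entry: "summable (\<lambda>k. matpow M k $ i $ j / fact k * y ^ k)"
proof (rule summable_comparison_test[OF _ summable_exp[of "mat_abs_sum M * \<bar>y\<bar>"]])
  have "norm (matpow M n $ i $ j / fact n * y ^ n) \<le> inverse (fact n) * (mat_abs_sum M * \<bar>y\<bar>) ^ n" for n
  proof -
    have entry: "\<bar>matpow M n $ i $ j\<bar> * \<bar>y\<bar> ^ n \<le> mat_abs_sum M ^ n * \<bar>y\<bar> ^ n"
      by (intro mult_right_mono abs_matpow_entry_le zero_le_power abs_ge_zero)
    have "norm (matpow M n $ i $ j / fact n * y ^ n) = (\<bar>matpow M n $ i $ j\<bar> * \<bar>y\<bar> ^ n) / fact n"
      by (simp add: abs_mult power_abs)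
    also have "\<dots> \<le> (mat_abs_sum M ^ n * \<bar>y\<bar> ^ n) / fact n"
      by (rule divide_right_mono[OF entry]) simp
    also have "\<dots> = inverse (fact n) * (mat_abs_sum M * \<bar>y\<bar>) ^ n"
      by (simp add: power_mult_distrib divide_inverse mult.commute)
    finally show ?thesis .
  qed
  then show "\<exists>N. \<forall>n\<ge>N. norm (matpow M n $ i $ j / fact n * y ^ n)
      \<le> inverse (fact n) * (mat_abs_sum M * \<bar>y\<bar>) ^ n"
    by blast
qed

lemma mat_exp_entry: "mat_exp M $ i $ j = (\<Sum>k. matpow M k $ i $ j / fact k)"
proof -
  have "(\<lambda>k. (1 / fact k) *\<^sub>R matpow M k) sums (\<chi> i j. \<Sum>k. matpow M k $ i $ j / fact k)"
    unfolding sums_def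
  proof (intro vec_tendstoI)
    fix i j
    have "(\<lambda>k. matpow M k $ i $ j / fact k) sums (\<Sum>k. matpow M k $ i $ j / fact k)"
      using summable_matpow_entry[of M i j 1] by (simp add: summable_sums)
    moreover have "(\<Sum>k<n. (1 / fact k) *\<^sub>R matpow M k) $ i $ j = (\<Sum>k<n. matpow M k $ i $ j / fact k)" for n
      by (simp add: sum_component)
    ultimately show "((\<lambda>n. (\<Sum>k<n. (1 / fact k) *\<^sub>R matpow M k) $ i $ j)
        \<longlongrightarrow> (\<chi> i j. \<Sum>k. matpow M k $ i $ j / fact k) $ i $ j) sequentially"
      by (simp add: sums_def)
  qed
  then show ?thesis
    unfolding mat_exp_def by (simp add: sums_unique[symmetric])
qed

lemma mat_exp_scaleR_entry:
  "mat_exp (t *\<^sub>R A) $ i $ j = (\<Sum>k. matpow A k $ i $ j / fact k * t ^ k)"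
  unfolding mat_exp_entry matpow_scaleR by (simp add: mult.commute mult.left_commute)

lemma mat_exp_zero: "mat_exp (0 *\<^sub>R A) = mat 1"
proof -
  have "mat_exp (0 *\<^sub>R A) $ i $ j = (\<Sum>k\<in>{0}. matpow A k $ i $ j / fact k * 0 ^ k)" for i j
    unfolding mat_exp_scaleR_entry by (rule suminf_finite) auto
  then show ?thesis by (simp add: vec_eq_iff)
qed

lemma has_real_derivative_mat_exp_entry:
  "((\<lambda>t. mat_exp (t *\<^sub>R A) $ i $ j) has_real_derivative (mat_exp (t *\<^sub>R A) ** A) $ i $ j) (at t)"
proof -
  let ?c = "\<lambda>k. matpow A k $ i $ j / fact k"
  have D: "((\<lambda>t. \<Sum>k. ?c k * t ^ k) has_real_derivative (\<Sum>n. diffs ?c n * t ^ n)) (at t)"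
    by (rule termdiffs_strong_converges_everywhere) (rule summable_matpow_entry)
  have "diffs ?c n * t ^ n = (\<Sum>l\<in>UNIV. (matpow A n $ i $ l / fact n * t ^ n) * A $ l $ j)" for n
  proof -
    have "diffs ?c n = matpow A (Suc n) $ i $ j / fact n"
      by (simp add: diffs_def fact_Suc del: matpow.simps of_nat_Suc)
    then have "diffs ?c n * t ^ n = (\<Sum>l\<in>UNIV. matpow A n $ i $ l * A $ l $ j) / fact n * t ^ n"
      unfolding matpow_Suc_right by (simp only: matrix_matrix_mult_def vec_lambda_beta)
    then show ?thesis
      by (simp only: sum_divide_distrib sum_distrib_right) (simp add: mult_ac)
  qed
  then have "(\<Sum>n. diffs ?c n * t ^ n)
      = (\<Sum>n. \<Sum>l\<in>UNIV. (matpow A n $ i $ l / fact n * t ^ n) * A $ l $ j)"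
    by simp
  also have "\<dots> = (\<Sum>l\<in>UNIV. \<Sum>n. (matpow A n $ i $ l / fact n * t ^ n) * A $ l $ j)"
    by (rule suminf_sum) (intro summable_mult2 summable_matpow_entry)
  also have "\<dots> = (\<Sum>l\<in>UNIV. mat_exp (t *\<^sub>R A) $ i $ l * A $ l $ j)"
    by (intro sum.cong refl)
       (simp only: suminf_mult2[OF summable_matpow_entry, symmetric] mat_exp_scaleR_entry)
  also have "\<dots> = (mat_exp (t *\<^sub>R A) ** A) $ i $ j"
    by (simp only: matrix_matrix_mult_def vec_lambda_beta)
  finally have "(\<Sum>n. diffs ?c n * t ^ n) = (mat_exp (t *\<^sub>R A) ** A) $ i $ j" .
  with D show ?thesis
    unfolding mat_exp_scaleR_entry by simp
qed

lemma continuous_on_mat_exp_entry: "continuous_on S (\<lambda>t. mat_exp (t *\<^sub>R A) $ i $ j)"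
  by (intro continuous_at_imp_continuous_on ballI DERIV_isCont[OF has_real_derivative_mat_exp_entry])

lemma continuous_on_mat_exp_reflect_entry:
  "continuous_on S (\<lambda>r. mat_exp ((t - r) *\<^sub>R A) $ i $ j)"
  by (rule continuous_on_compose2[OF continuous_on_mat_exp_entry[of UNIV] continuous_on_diff])
     (auto intro: continuous_intros)

lemma continuous_on_mat_exp_reflect_mult_entry:
  "continuous_on S (\<lambda>r. (mat_exp ((t - r) *\<^sub>R A) ** A) $ i $ j)"
  unfolding matrix_matrix_mult_def vec_lambda_beta
  by (intro continuous_on_sum continuous_on_mult continuous_on_mat_exp_reflect_entry continuous_on_const)

lemma has_integral_mat_exp_reflect_mult:
  assumes "s \<le> t"
  shows "((\<lambda>r. (mat_exp ((t - r) *\<^sub>R A) ** A) $ i $ j) has_integral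
          mat_exp ((t - s) *\<^sub>R A) $ i $ j - mat 1 $ i $ j) {s..t}"
proof -
  have "((\<lambda>r. - mat_exp ((t - r) *\<^sub>R A) $ i $ j) has_real_derivative
      (mat_exp ((t - r) *\<^sub>R A) ** A) $ i $ j) (at r)" for r
  proof -
    have "((\<lambda>r. t - r) has_real_derivative -1) (at r)"
      by (auto intro!: derivative_eq_intros)
    from DERIV_minus[OF DERIV_chain2[OF has_real_derivative_mat_exp_entry this]]
    show ?thesis by simp
  qed
  then have "((\<lambda>r. (mat_exp ((t - r) *\<^sub>R A) ** A) $ i $ j) has_integral
      - mat_exp ((t - t) *\<^sub>R A) $ i $ j - (- mat_exp ((t - s) *\<^sub>R A) $ i $ j)) {s..t}"
    by (intro fundamental_theorem_of_calculus[OF assms])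
       (auto simp: has_real_derivative_iff_has_vector_derivative[symmetric]
             intro: has_field_derivative_at_within)
  then show ?thesis using mat_exp_zero[of A] by simp
qed

lemma integrable_triangle_kernel:
  fixes k P :: "real \<Rightarrow> real"
  assumes k: "continuous_on UNIV k"
    and [measurable]: "P \<in> borel_measurable lborel" and P: "integrable lborel P"
  shows "integrable (lborel \<Otimes>\<^sub>M lborel)
           (\<lambda>(r, s). if 0 \<le> r \<and> r \<le> t \<and> 0 \<le> s \<and> s \<le> r then k r * P s else 0)"
    (is "integrable _ (\<lambda>(r, s). ?G r s)")
proof -
  have [measurable]: "k \<in> borel_measurable borel"
    by (rule borel_measurable_continuous_onI[OF k])
  have "bounded (k ` {0..t})"
    by (intro compact_imp_bounded compact_continuous_image continuous_on_subset[OF k]) auto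
  then obtain K where "K > 0" and K: "\<And>r. r \<in> {0..t} \<Longrightarrow> \<bar>k r\<bar> \<le> K"
    unfolding bounded_pos by (metis imageI real_norm_def)
  have G_le: "\<bar>?G r s\<bar> \<le> indicator {0..t} r * (K * \<bar>P s\<bar>)" for r s
    using K[of r] by (auto simp: abs_mult indicator_def intro!: mult_right_mono)
  have G_le': "\<bar>?G r s\<bar> \<le> K * \<bar>P s\<bar>" for r s
    using K[of r] \<open>K > 0\<close> by (auto simp: abs_mult intro!: mult_right_mono)
  have KP: "integrable lborel (\<lambda>s. K * \<bar>P s\<bar>)"
    using P by auto
  have G_int: "integrable lborel (\<lambda>s. ?G r s)" for r
  proof (rule Bochner_Integration.integrable_bound[OF KP])
    show "AE s in lborel. norm (?G r s) \<le> norm (K * \<bar>P s\<bar>)"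
      using G_le' \<open>K > 0\<close> by (intro AE_I2) (simp add: abs_mult)
  qed measurable
  show ?thesis
  proof (rule lborel_pair.Fubini_integrable)
    show "AE r in lborel. integrable lborel (\<lambda>s. case (r, s) of (r, s) \<Rightarrow> ?G r s)"
      using G_int by simp
    have bound_int: "integrable lborel (\<lambda>r. (K * (\<integral>s. \<bar>P s\<bar> \<partial>lborel)) * indicator {0..t} r)"
      by (rule borel_integrable_atLeastAtMost) simp
    show "integrable lborel (\<lambda>r. \<integral>s. norm (case (r, s) of (r, s) \<Rightarrow> ?G r s) \<partial>lborel)"
    proof (rule Bochner_Integration.integrable_bound[OF bound_int])
      show "AE r in lborel. norm (\<integral>s. norm (case (r, s) of (r, s) \<Rightarrow> ?G r s) \<partial>lborel)
              \<le> norm ((K * (\<integral>s. \<bar>P s\<bar> \<partial>lborel)) * indicator {0..t} r)"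
      proof (rule AE_I2)
        fix r
        have "(\<integral>s. \<bar>?G r s\<bar> \<partial>lborel) \<le> (\<integral>s. indicator {0..t} r * (K * \<bar>P s\<bar>) \<partial>lborel)"
          by (rule integral_mono) (use G_int KP G_le in auto)
        then show "norm (\<integral>s. norm (case (r, s) of (r, s) \<Rightarrow> ?G r s) \<partial>lborel)
              \<le> norm ((K * (\<integral>s. \<bar>P s\<bar> \<partial>lborel)) * indicator {0..t} r)"
          by (simp add: mult_ac)
      qed
    qed measurable
  qed measurable
qed

lemma lborel_integral_triangle_swap:
  fixes k P :: "real \<Rightarrow> real"
  assumes k: "continuous_on UNIV k"
    and P_meas[measurable]: "P \<in> borel_measurable lborel" and P: "integrable lborel P"
    and P_zero: "\<And>s. s \<notin> {0..t} \<Longrightarrow> P s = 0"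
  shows "integrable lborel (\<lambda>r. indicator {0..t} r * k r * (\<integral>s. indicator {0..r} s * P s \<partial>lborel))"
    and "integrable lborel (\<lambda>s. P s * (\<integral>r. indicator {s..t} r * k r \<partial>lborel))"
    and "(\<integral>r. indicator {0..t} r * k r * (\<integral>s. indicator {0..r} s * P s \<partial>lborel) \<partial>lborel)
         = (\<integral>s. P s * (\<integral>r. indicator {s..t} r * k r \<partial>lborel) \<partial>lborel)"
proof -
  define G where "G r s = (if 0 \<le> r \<and> r \<le> t \<and> 0 \<le> s \<and> s \<le> r then k r * P s else 0)" for r s
  have G_int: "integrable (lborel \<Otimes>\<^sub>M lborel) (\<lambda>(r, s). G r s)"
    unfolding G_def by (rule integrable_triangle_kernel[OF k P_meas P])
  have inner_s: "(\<integral>s. G r s \<partial>lborel) = indicator {0..t} r * k r * (\<integral>s. indicator {0..r} s * P s \<partial>lborel)" for r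
  proof (cases "0 \<le> r \<and> r \<le> t")
    case True
    then have "G r s = k r * (indicator {0..r} s * P s)" for s
      by (auto simp: G_def split: split_indicator)
    then show ?thesis using True by simp
  qed (auto simp: G_def)
  have inner_r: "(\<integral>r. G r s \<partial>lborel) = P s * (\<integral>r. indicator {s..t} r * k r \<partial>lborel)" for s
  proof (cases "P s = 0")
    case False
    then have "0 \<le> s \<and> s \<le> t"
      using P_zero by auto
    then have "G r s = P s * (indicator {s..t} r * k r)" for r
      by (auto simp: G_def split: split_indicator)
    then show ?thesis by simp
  next
    case True
    then have "G r s = 0" for r
      by (simp add: G_def)
    then show ?thesis using True by simp
  qed
  show "integrable lborel (\<lambda>r. indicator {0..t} r * k r * (\<integral>s. indicator {0..r} s * P s \<partial>lborel))"
    using lborel_pair.integrable_fst[OF G_int] by (simp add: inner_s)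
  show "integrable lborel (\<lambda>s. P s * (\<integral>r. indicator {s..t} r * k r \<partial>lborel))"
    using lborel_pair.integrable_snd[OF G_int] by (simp add: inner_r)
  have "(\<integral>s. (\<integral>r. G r s \<partial>lborel) \<partial>lborel) = (\<integral>r. (\<integral>s. G r s \<partial>lborel) \<partial>lborel)"
    by (rule lborel_pair.Fubini_integral) (use G_int in simp)
  then show "(\<integral>r. indicator {0..t} r * k r * (\<integral>s. indicator {0..r} s * P s \<partial>lborel) \<partial>lborel)
         = (\<integral>s. P s * (\<integral>r. indicator {s..t} r * k r \<partial>lborel) \<partial>lborel)"
    by (simp only: inner_s inner_r)
qed

lemma lborel_integral_indicator_eq_integral:
  fixes g :: "real \<Rightarrow> real"
  assumes "integrable lborel (\<lambda>x. indicator S x * g x)"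
  shows "(\<integral>x. indicator S x * g x \<partial>lborel) = integral S g"
proof -
  have eq: "(\<lambda>x. indicator S x * g x) = (\<lambda>x. if x \<in> S then g x else 0)"
    by (auto simp: indicator_def)
  have "(\<integral>x. indicator S x * g x \<partial>lborel) = integral UNIV (\<lambda>x. indicator S x * g x)"
    using has_integral_integral_lborel[OF assms] by (rule integral_unique[symmetric])
  then show ?thesis
    unfolding eq Henstock_Kurzweil_Integration.integral_restrict_UNIV .
qed

lemma integral_triangle_swap:
  fixes k \<phi> :: "real \<Rightarrow> real"
  assumes k: "continuous_on UNIV k"
    and \<phi>_meas: "(\<lambda>s. indicator {0..t} s * \<phi> s) \<in> borel_measurable lborel"
    and \<phi>: "\<phi> absolutely_integrable_on {0..t}"
  shows "integral {0..t} (\<lambda>r. k r * integral {0..r} \<phi>) = integral {0..t} (\<lambda>s. integral {s..t} k * \<phi> s)"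
proof -
  define P where "P s = indicator {0..t} s * \<phi> s" for s
  have P_meas: "P \<in> borel_measurable lborel"
    using \<phi>_meas by (simp add: P_def[abs_def])
  have "integrable lebesgue P"
    using \<phi> by (simp add: set_integrable_def P_def[abs_def])
  then have P: "integrable lborel P"
    using integrable_completion[of P lborel] P_meas by simp
  have P_zero: "\<And>s. s \<notin> {0..t} \<Longrightarrow> P s = 0"
    by (simp add: P_def)
  note swap = lborel_integral_triangle_swap[where t=t, OF k P_meas P P_zero]
  have k_int: "integrable lborel (\<lambda>r. indicator {s..t} r * k r)" for s
    using borel_integrable_atLeastAtMost[of s t k] k
    by (simp add: continuous_on_eq_continuous_at mult.commute)
  have inner_s: "(\<integral>s. indicator {0..r} s * P s \<partial>lborel) = integral {0..r} \<phi>" if "r \<le> t" for r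
  proof -
    have "(\<lambda>s. indicator {0..r} s * P s) = (\<lambda>s. indicator {0..r} s * \<phi> s)"
      using that by (auto simp: P_def indicator_def)
    moreover have "integrable lborel (\<lambda>s. indicator {0..r} s * P s)"
      using integrable_mult_indicator[OF _ P, of "{0..r}"] by simp
    ultimately show ?thesis by (simp add: lborel_integral_indicator_eq_integral)
  qed
  have inner_r: "(\<integral>r. indicator {s..t} r * k r \<partial>lborel) = integral {s..t} k" for s
    by (rule lborel_integral_indicator_eq_integral[OF k_int])
  have L: "(\<lambda>r. indicator {0..t} r * k r * (\<integral>s. indicator {0..r} s * P s \<partial>lborel))
      = (\<lambda>r. indicator {0..t} r * (k r * integral {0..r} \<phi>))"
    by (intro ext) (simp add: inner_s split: split_indicator)
  have R: "(\<lambda>s. P s * (\<integral>r. indicator {s..t} r * k r \<partial>lborel))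
      = (\<lambda>s. indicator {0..t} s * (integral {s..t} k * \<phi> s))"
    by (intro ext) (simp add: inner_r P_def)
  have "integral {0..t} (\<lambda>r. k r * integral {0..r} \<phi>)
      = (\<integral>r. indicator {0..t} r * (k r * integral {0..r} \<phi>) \<partial>lborel)"
    using lborel_integral_indicator_eq_integral[OF swap(1)[unfolded L]] by (rule sym)
  also have "\<dots> = (\<integral>s. indicator {0..t} s * (integral {s..t} k * \<phi> s) \<partial>lborel)"
    using swap(3) unfolding L R .
  also have "\<dots> = integral {0..t} (\<lambda>s. integral {s..t} k * \<phi> s)"
    using lborel_integral_indicator_eq_integral[OF swap(2)[unfolded R]] .
  finally show ?thesis .
qed

lemma absolutely_integrable_on_vec_nth:
  fixes f :: "real \<Rightarrow> real^'n"
  shows "f absolutely_integrable_on S \<Longrightarrow> (\<lambda>x. f x $ i) absolutely_integrable_on S"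
  using absolutely_integrable_component[where f=f and A=S and b="axis i 1"]
  by (simp add: cart_eq_inner_axis)

lemma has_integral_mat_exp_reflect_by_parts:
  fixes A :: "real^'N^'N" and \<phi> :: "real \<Rightarrow> real"
  assumes t: "0 \<le> t"
    and \<phi>_meas: "(\<lambda>s. indicator {0..t} s * \<phi> s) \<in> borel_measurable lborel"
    and \<phi>: "\<phi> absolutely_integrable_on {0..t}"
  shows "((\<lambda>s. (mat_exp ((t - s) *\<^sub>R A) $ a $ b - mat 1 $ a $ b) * \<phi> s) has_integral
           integral {0..t} (\<lambda>r. (mat_exp ((t - r) *\<^sub>R A) ** A) $ a $ b * integral {0..r} \<phi>)) {0..t}"
proof -
  let ?E = "\<lambda>s. mat_exp ((t - s) *\<^sub>R A)"
  have "(\<lambda>s. (?E s $ a $ b - mat 1 $ a $ b) * \<phi> s) absolutely_integrable_on {0..t}"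
  proof (rule absolutely_integrable_bounded_measurable_product_real[OF _ _ _ \<phi>])
    have c: "continuous_on {0..t} (\<lambda>s. ?E s $ a $ b - mat 1 $ a $ b)"
      by (intro continuous_on_diff continuous_on_mat_exp_reflect_entry continuous_on_const)
    show "(\<lambda>s. ?E s $ a $ b - mat 1 $ a $ b) \<in> borel_measurable (lebesgue_on {0..t})"
      by (rule continuous_imp_measurable_on_sets_lebesgue[OF c]) simp
    show "bounded ((\<lambda>s. ?E s $ a $ b - mat 1 $ a $ b) ` {0..t})"
      by (intro compact_imp_bounded compact_continuous_image c) simp
  qed simp
  then have "((\<lambda>s. (?E s $ a $ b - mat 1 $ a $ b) * \<phi> s) has_integral
      integral {0..t} (\<lambda>s. (?E s $ a $ b - mat 1 $ a $ b) * \<phi> s)) {0..t}"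
    by (intro integrable_integral set_lebesgue_integral_eq_integral(1))
  moreover have "integral {0..t} (\<lambda>r. (?E r ** A) $ a $ b * integral {0..r} \<phi>)
      = integral {0..t} (\<lambda>s. integral {s..t} (\<lambda>r. (?E r ** A) $ a $ b) * \<phi> s)"
    by (rule integral_triangle_swap[OF continuous_on_mat_exp_reflect_mult_entry \<phi>_meas \<phi>])
  moreover have "integral {0..t} (\<lambda>s. integral {s..t} (\<lambda>r. (?E r ** A) $ a $ b) * \<phi> s)
      = integral {0..t} (\<lambda>s. (?E s $ a $ b - mat 1 $ a $ b) * \<phi> s)"
  proof (rule integral_cong)
    fix s assume "s \<in> {0..t}"
    then have "integral {s..t} (\<lambda>r. (?E r ** A) $ a $ b) = ?E s $ a $ b - mat 1 $ a $ b"
      by (intro integral_unique has_integral_mat_exp_reflect_mult) simp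
    then show "integral {s..t} (\<lambda>r. (?E r ** A) $ a $ b) * \<phi> s
        = (?E s $ a $ b - mat 1 $ a $ b) * \<phi> s"
      by (rule arg_cong)
  qed
  ultimately show ?thesis
    by simp
qed

(* The state is merely absolutely continuous, so instead of differentiating e^((t-s)A) x(s)
   the proof exchanges the order of integration in the double integral of e^((t-r)A) A f(s)
   over 0 \<le> s \<le> r \<le> t. *)
lemma variation_of_constants:
  fixes A :: "real^'N^'N" and f x :: "real \<Rightarrow> real^'N"
  assumes t: "0 \<le> t" and f: "f absolutely_integrable_on {0..t}"
    and f_meas: "\<And>b. (\<lambda>s. indicator {0..t} s * f s $ b) \<in> borel_measurable lborel"
    and x: "\<And>r. r \<in> {0..t} \<Longrightarrow> x r = integral {0..r} f"
  shows "((\<lambda>s. (mat_exp ((t - s) *\<^sub>R A) *v (f s - A *v x s)) $ a) has_integral x t $ a) {0..t}"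
proof -
  let ?E = "\<lambda>s. mat_exp ((t - s) *\<^sub>R A)"
  have f_b: "(\<lambda>s. f s $ b) absolutely_integrable_on {0..t}" for b
    by (rule absolutely_integrable_on_vec_nth[OF f])
  have x_b: "x r $ b = integral {0..r} (\<lambda>s. f s $ b)" if "r \<in> {0..t}" for r b
  proof -
    have "f integrable_on {0..r}"
      using that set_lebesgue_integral_eq_integral(1)[OF absolutely_integrable_on_subinterval[OF f]]
      by auto
    then show ?thesis using x[OF that] by (simp add: integral_component_eq_cart)
  qed
  define J where "J b = integral {0..t} (\<lambda>r. (?E r ** A) $ a $ b * x r $ b)" for b
  have Ax: "((\<lambda>r. (?E r *v (A *v x r)) $ a) has_integral (\<Sum>b\<in>UNIV. J b)) {0..t}"
  proof -
    have x_cont: "continuous_on {0..t} (\<lambda>r. x r $ b)" for b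
    proof (rule continuous_on_eq[OF indefinite_integral_continuous_1])
      show "(\<lambda>s. f s $ b) integrable_on {0..t}"
        using f_b set_lebesgue_integral_eq_integral(1) by blast
    qed (simp add: x_b)
    have Ax_sum: "(?E r *v (A *v x r)) $ a = (\<Sum>b\<in>UNIV. (?E r ** A) $ a $ b * x r $ b)" for r
      by (simp only: matrix_vector_mul_assoc) (simp only: matrix_vector_mult_def vec_lambda_beta)
    show ?thesis
      unfolding Ax_sum J_def
      by (intro has_integral_sum finite_class.finite_UNIV integrable_integral integrable_continuous_interval
          continuous_on_mult continuous_on_mat_exp_reflect_mult_entry x_cont)
  qed
  have Ef: "((\<lambda>s. (?E s *v f s) $ a - f s $ a) has_integral (\<Sum>b\<in>UNIV. J b)) {0..t}"
  proof -
    have Ef_sum: "(?E s *v f s) $ a - f s $ a = (\<Sum>b\<in>UNIV. (?E s $ a $ b - mat 1 $ a $ b) * f s $ b)"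
      for s
    proof -
      have "(\<Sum>b\<in>UNIV. (?E s $ a $ b - mat 1 $ a $ b) * f s $ b) = ((?E s - mat 1) *v f s) $ a"
        by (simp only: matrix_vector_mult_def vec_lambda_beta vector_minus_component)
      then show ?thesis
        by (simp only: matrix_vector_mult_diff_rdistrib matrix_vector_mul_lid vector_minus_component)
    qed
    have "J b = integral {0..t} (\<lambda>r. (?E r ** A) $ a $ b * integral {0..r} (\<lambda>s. f s $ b))" for b
      unfolding J_def by (rule integral_cong) (simp add: x_b)
    then show ?thesis
      unfolding Ef_sum
      by (intro has_integral_sum finite_class.finite_UNIV) (simp add: has_integral_mat_exp_reflect_by_parts[OF t f_meas f_b])
  qed
  have "((\<lambda>s. f s $ a) has_integral x t $ a) {0..t}"
    using x_b[of t a] t f_b set_lebesgue_integral_eq_integral(1) by (auto intro: integrable_integral)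
  from has_integral_add[OF Ef this]
  have "((\<lambda>s. (?E s *v f s) $ a) has_integral (\<Sum>b\<in>UNIV. J b) + x t $ a) {0..t}"
    by simp
  from has_integral_diff[OF this Ax]
  have "((\<lambda>s. (?E s *v f s) $ a - (?E s *v (A *v x s)) $ a) has_integral x t $ a) {0..t}"
    by simp
  then show ?thesis
    by (simp only: matrix_vector_mult_diff_distrib vector_minus_component)
qed

lemma abs_sin_diff_le: "\<bar>sin (a::real) - sin b\<bar> \<le> \<bar>a - b\<bar>"
proof -
  have "\<bar>sin a - sin b\<bar> = 2 * \<bar>sin ((a - b) / 2)\<bar> * \<bar>cos ((a + b) / 2)\<bar>"
    by (simp add: sin_diff_sin abs_mult)
  also have "\<dots> \<le> 2 * \<bar>(a - b) / 2\<bar> * 1"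
    by (intro mult_mono abs_sin_x_le_abs_x abs_cos_le_one) auto
  finally show ?thesis by simp
qed

lemma abs_sin_linearization_error_le:
  fixes p zb z :: real
  assumes zb: "0 < zb" and z: "\<bar>z\<bar> \<le> zb"
  shows "\<bar>sin (p + z) - sin p - cos p * z\<bar>
           \<le> Sup {\<bar>(sin (p + s) - sin p) / s - cos p\<bar> | s. 0 < \<bar>s\<bar> \<and> \<bar>s\<bar> \<le> zb} * zb"
proof -
  let ?S = "{\<bar>(sin (p + s) - sin p) / s - cos p\<bar> | s. 0 < \<bar>s\<bar> \<and> \<bar>s\<bar> \<le> zb}"
  have "\<bar>(sin (p + s) - sin p) / s - cos p\<bar> \<le> 2" for s
  proof -
    have "\<bar>(sin (p + s) - sin p) / s\<bar> \<le> 1"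
      using abs_sin_diff_le[of "p + s" p] by (cases "s = 0") (simp_all add: abs_divide divide_le_eq_1)
    then show ?thesis using abs_cos_le_one[of p] by linarith
  qed
  then have bdd: "bdd_above ?S"
    by (auto intro!: bdd_aboveI[of _ 2])
  have "\<bar>(sin (p + zb) - sin p) / zb - cos p\<bar> \<in> ?S"
    using zb by auto
  then have Sup_nonneg: "0 \<le> Sup ?S"
    by (rule order_trans[OF abs_ge_zero cSup_upper[OF _ bdd]])
  show ?thesis
  proof (cases "z = 0")
    case False
    then have "\<bar>(sin (p + z) - sin p) / z - cos p\<bar> \<in> ?S"
      using z by auto
    then have "\<bar>(sin (p + z) - sin p) / z - cos p\<bar> * \<bar>z\<bar> \<le> Sup ?S * zb"
      by (intro mult_mono cSup_upper bdd Sup_nonneg z) simp_all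
    moreover have "\<bar>sin (p + z) - sin p - cos p * z\<bar> = \<bar>(sin (p + z) - sin p) / z - cos p\<bar> * \<bar>z\<bar>"
      using False by (simp add: abs_mult[symmetric] field_simps)
    ultimately show ?thesis by simp
  qed (use Sup_nonneg zb in simp)
qed

lemma gamma_psi_mult_nth: "(gamma_psi phis zbar *v w) $ i = gamma_psi phis zbar $ i $ i * w $ i"
proof -
  have "(gamma_psi phis zbar *v w) $ i = (\<Sum>j\<in>UNIV. if i = j then gamma_psi phis zbar $ i $ i * w $ i else 0)"
    unfolding matrix_vector_mult_def vec_lambda_beta by (rule sum.cong) (auto simp: gamma_psi_def)
  then show ?thesis by simp
qed

lemma abs_psi_le_gamma_psi:
  assumes "0 < zbar $ i" and "\<bar>z $ i\<bar> \<le> zbar $ i"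
  shows "\<bar>psi phis z $ i\<bar> \<le> (gamma_psi phis zbar *v zbar) $ i"
  using abs_sin_linearization_error_le[OF assms, of "phis $ i"]
  unfolding gamma_psi_mult_nth by (simp add: psi_def gamma_psi_def)

lemma integral_reflect_interval:
  fixes g :: "real \<Rightarrow> real"
  shows "integral {0..t} (\<lambda>s. g (t - s)) = integral {0..t} g"
proof -
  have "integral {0..t} (\<lambda>s. g (t - s)) = integral {- 0..- (- t)} (\<lambda>s. (\<lambda>y. g (t + y)) (- s))"
    by simp
  also have "\<dots> = integral {-t..0} (\<lambda>y. g (t + y))"
    using Henstock_Kurzweil_Integration.integral_reflect_real[where a="-t" and b=0 and f="\<lambda>y. g (t + y)"]
    by (simp only: minus_minus minus_zero diff_conv_add_uminus)
  also have "\<dots> = integral {0 - t..t - t} (\<lambda>y. g (y + t))"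
    by (simp add: add.commute)
  also have "\<dots> = integral {0..t} g"
    by (rule integral_shift_real_ivl)
  finally show ?thesis .
qed

lemma absolutely_integrable_convolution:
  fixes h w :: "real \<Rightarrow> real"
  assumes h: "continuous_on UNIV h"
    and w_meas: "w \<in> borel_measurable (lebesgue_on {0..t})" and w: "\<And>s. s \<in> {0..t} \<Longrightarrow> \<bar>w s\<bar> \<le> c"
  shows "(\<lambda>s. h (t - s) * w s) absolutely_integrable_on {0..t}"
proof -
  have "(\<lambda>s. w s * h (t - s)) absolutely_integrable_on {0..t}"
  proof (rule absolutely_integrable_bounded_measurable_product_real[OF w_meas])
    show "bounded (w ` {0..t})"
      using w unfolding bounded_iff by (intro exI[of _ c]) auto
    show "(\<lambda>s. h (t - s)) absolutely_integrable_on {0..t}"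
      by (intro absolutely_integrable_continuous_real continuous_on_compose2[OF h] continuous_intros) auto
  qed simp
  then show ?thesis
    by (simp add: mult.commute)
qed

lemma abs_integral_convolution_le:
  fixes h w :: "real \<Rightarrow> real"
  assumes t: "0 \<le> t" and h: "continuous_on UNIV h" and h_int: "h absolutely_integrable_on {0..}"
    and w_meas: "w \<in> borel_measurable (lebesgue_on {0..t})" and w: "\<And>s. s \<in> {0..t} \<Longrightarrow> \<bar>w s\<bar> \<le> c"
  shows "\<bar>integral {0..t} (\<lambda>s. h (t - s) * w s)\<bar> \<le> c * integral {0..} (\<lambda>\<tau>. \<bar>h \<tau>\<bar>)"
proof -
  have c: "0 \<le> c"
    using w[of 0] t by auto
  have h_abs: "continuous_on {0..t} (\<lambda>s. \<bar>h (t - s)\<bar>)"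
    by (intro continuous_on_rabs continuous_on_compose2[OF h] continuous_intros) auto
  have "\<bar>integral {0..t} (\<lambda>s. h (t - s) * w s)\<bar> \<le> integral {0..t} (\<lambda>s. c * \<bar>h (t - s)\<bar>)"
    using integral_norm_bound_integral[of "\<lambda>s. h (t - s) * w s" "{0..t}" "\<lambda>s. c * \<bar>h (t - s)\<bar>"]
      set_lebesgue_integral_eq_integral(1)[OF absolutely_integrable_convolution[OF h w_meas w]]
      integrable_continuous_interval[OF continuous_on_mult[OF continuous_on_const h_abs]]
      w mult_right_mono[OF w]
    by (force simp: abs_mult mult.commute)
  also have "\<dots> = c * integral {0..t} (\<lambda>\<tau>. \<bar>h \<tau>\<bar>)"
    using integral_reflect_interval[of t "\<lambda>\<tau>. \<bar>h \<tau>\<bar>"] by simp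
  also have "\<dots> \<le> c * integral {0..} (\<lambda>\<tau>. \<bar>h \<tau>\<bar>)"
  proof (intro mult_left_mono c integral_subset_le)
    show "(\<lambda>\<tau>. \<bar>h \<tau>\<bar>) integrable_on {0..t}"
      by (intro integrable_continuous_interval continuous_on_rabs continuous_on_subset[OF h]) auto
    show "(\<lambda>\<tau>. \<bar>h \<tau>\<bar>) integrable_on {0..}"
      using h_int unfolding absolutely_integrable_on_def by simp
  qed auto
  finally show ?thesis .
qed

lemma impulse_nth: "impulse C A B t $ i $ q
    = (\<Sum>p\<in>UNIV. \<Sum>r\<in>UNIV. C $ i $ p * mat_exp (t *\<^sub>R A) $ p $ r * B $ r $ q)"
  by (simp add: impulse_def matrix_matrix_mult_def sum_distrib_left sum_distrib_right mult.assoc)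
     (rule sum.swap)

lemma continuous_on_impulse_nth: "continuous_on S (\<lambda>t. impulse C A B t $ i $ q)"
  unfolding impulse_nth
  by (intro continuous_on_sum continuous_on_mult continuous_on_const continuous_on_mat_exp_entry)

lemma has_integral_output_convolution:
  fixes C :: "real^'N^'m" and A :: "real^'N^'N" and B1 :: "real^'n^'N" and B2 :: "real^'l^'N"
  assumes "\<And>a. ((\<lambda>s. (mat_exp ((t - s) *\<^sub>R A) *v (B1 *v w1 s + B2 *v w2 s)) $ a) has_integral x $ a) {0..t}"
  shows "((\<lambda>s. (impulse C A B1 (t - s) *v w1 s) $ i + (impulse C A B2 (t - s) *v w2 s) $ i)
           has_integral (C *v x) $ i) {0..t}"
proof -
  let ?E = "\<lambda>s. mat_exp ((t - s) *\<^sub>R A)"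
  have out_sum: "(\<Sum>a\<in>UNIV. C $ i $ a * (?E s *v (B1 *v w1 s + B2 *v w2 s)) $ a)
      = (impulse C A B1 (t - s) *v w1 s) $ i + (impulse C A B2 (t - s) *v w2 s) $ i" for s
  proof -
    have "(\<Sum>a\<in>UNIV. C $ i $ a * (?E s *v (B1 *v w1 s + B2 *v w2 s)) $ a)
        = (C *v (?E s *v (B1 *v w1 s + B2 *v w2 s))) $ i"
      by (simp only: matrix_vector_mult_def[of C] vec_lambda_beta)
    also have "C *v (?E s *v (B1 *v w1 s + B2 *v w2 s))
        = impulse C A B1 (t - s) *v w1 s + impulse C A B2 (t - s) *v w2 s"
      by (simp only: impulse_def matrix_vector_mul_assoc matrix_vector_right_distrib matrix_mul_assoc)
    finally show ?thesis by simp
  qed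
  have x_sum: "(\<Sum>a\<in>UNIV. C $ i $ a * x $ a) = (C *v x) $ i"
    by (simp only: matrix_vector_mult_def vec_lambda_beta)
  have "((\<lambda>s. \<Sum>a\<in>UNIV. C $ i $ a * (?E s *v (B1 *v w1 s + B2 *v w2 s)) $ a) has_integral
      (\<Sum>a\<in>UNIV. C $ i $ a * x $ a)) {0..t}"
    by (intro has_integral_sum has_integral_mult_right assms) auto
  then show ?thesis
    unfolding out_sum x_sum .
qed

lemma abs_output_le_gain:
  fixes C :: "real^'N^'m" and A :: "real^'N^'N" and B1 :: "real^'n^'N" and B2 :: "real^'l^'N"
    and w1 :: "real \<Rightarrow> real^'n" and w2 :: "real \<Rightarrow> real^'l"
  assumes t: "0 \<le> t"
    and h1: "\<And>p q. (\<lambda>\<tau>. impulse C A B1 \<tau> $ p $ q) absolutely_integrable_on {0..}"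
    and h2: "\<And>p q. (\<lambda>\<tau>. impulse C A B2 \<tau> $ p $ q) absolutely_integrable_on {0..}"
    and w1_meas: "\<And>q. (\<lambda>s. w1 s $ q) \<in> borel_measurable (lebesgue_on {0..t})"
    and w2_meas: "\<And>q. (\<lambda>s. w2 s $ q) \<in> borel_measurable (lebesgue_on {0..t})"
    and w1: "\<And>s q. s \<in> {0..t} \<Longrightarrow> \<bar>w1 s $ q\<bar> \<le> b1 $ q"
    and w2: "\<And>s q. s \<in> {0..t} \<Longrightarrow> \<bar>w2 s $ q\<bar> \<le> b2 $ q"
    and y: "((\<lambda>s. (impulse C A B1 (t - s) *v w1 s) $ i + (impulse C A B2 (t - s) *v w2 s) $ i)
              has_integral y) {0..t}"
  shows "\<bar>y\<bar> \<le> (gain C A B1 *v b1 + gain C A B2 *v b2) $ i"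
proof -
  let ?k1 = "\<lambda>q. integral {0..t} (\<lambda>s. impulse C A B1 (t - s) $ i $ q * w1 s $ q)"
  let ?k2 = "\<lambda>q. integral {0..t} (\<lambda>s. impulse C A B2 (t - s) $ i $ q * w2 s $ q)"
  have "((\<lambda>s. impulse C A B1 (t - s) $ i $ q * w1 s $ q) has_integral ?k1 q) {0..t}" for q
    by (intro integrable_integral set_lebesgue_integral_eq_integral(1)
        absolutely_integrable_convolution[OF continuous_on_impulse_nth w1_meas w1])
  moreover have "((\<lambda>s. impulse C A B2 (t - s) $ i $ q * w2 s $ q) has_integral ?k2 q) {0..t}" for q
    by (intro integrable_integral set_lebesgue_integral_eq_integral(1)
        absolutely_integrable_convolution[OF continuous_on_impulse_nth w2_meas w2])
  ultimately have "((\<lambda>s. (impulse C A B1 (t - s) *v w1 s) $ i + (impulse C A B2 (t - s) *v w2 s) $ i)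
      has_integral (\<Sum>q\<in>UNIV. ?k1 q) + (\<Sum>q\<in>UNIV. ?k2 q)) {0..t}"
    unfolding matrix_vector_mult_def vec_lambda_beta by (intro has_integral_add has_integral_sum) auto
  then have "y = (\<Sum>q\<in>UNIV. ?k1 q) + (\<Sum>q\<in>UNIV. ?k2 q)"
    by (rule has_integral_unique[OF y])
  then have "\<bar>y\<bar> \<le> (\<Sum>q\<in>UNIV. \<bar>?k1 q\<bar>) + (\<Sum>q\<in>UNIV. \<bar>?k2 q\<bar>)"
    using sum_abs[of ?k1 UNIV] sum_abs[of ?k2 UNIV] by linarith
  also have "\<dots> \<le> (\<Sum>q\<in>UNIV. gain C A B1 $ i $ q * b1 $ q) + (\<Sum>q\<in>UNIV. gain C A B2 $ i $ q * b2 $ q)"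
    using abs_integral_convolution_le[OF t continuous_on_impulse_nth h1 w1_meas w1]
      abs_integral_convolution_le[OF t continuous_on_impulse_nth h2 w2_meas w2]
    by (intro add_mono sum_mono) (simp_all add: gain_def mult.commute)
  also have "\<dots> = (gain C A B1 *v b1 + gain C A B2 *v b2) $ i"
    by (simp only: vector_add_component matrix_vector_mult_def vec_lambda_beta)
  finally show ?thesis .
qed

lemma linf_leI:
  assumes "\<And>t i. 0 \<le> t \<Longrightarrow> \<bar>w t $ i\<bar> \<le> b $ i"
  shows "linf_le w b"
  unfolding linf_le_def linf_def using assms by (auto intro!: SUP_least)

lemma linf_leD:
  assumes "linf_le w b" and "0 \<le> t"
  shows "\<bar>w t $ i\<bar> \<le> b $ i"
proof -
  have "ereal \<bar>w t $ i\<bar> \<le> (SUP t\<in>{0..}. ereal \<bar>w t $ i\<bar>)"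
    using assms(2) by (intro SUP_upper) auto
  also have "\<dots> \<le> ereal (b $ i)"
    using assms(1) by (simp add: linf_le_def linf_def)
  finally show ?thesis by simp
qed

lemma continuous_on_vec_nth_comp:
  fixes f :: "real \<Rightarrow> real^'n"
  shows "continuous_on S f \<Longrightarrow> continuous_on S (\<lambda>s. f s $ i)"
  by (rule linear_continuous_on_compose[OF _ bounded_linear.linear[OF bounded_linear_vec_nth]])

lemma borel_measurable_vec_nth_comp:
  fixes g :: "'a \<Rightarrow> real^'n"
  shows "g \<in> borel_measurable M \<Longrightarrow> (\<lambda>s. g s $ i) \<in> borel_measurable M"
  by (rule measurable_compose[OF _ borel_measurable_continuous_onI[OF
        linear_continuous_on[OF bounded_linear_vec_nth]]])

(* First-exit argument: at the first time the closed box is left, the trajectory has stayed in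
   it until then, so the hypothesis puts it strictly inside, a contradiction. *)
lemma strict_box_bound_persists:
  fixes z :: "real \<Rightarrow> real^'k"
  assumes cont: "\<And>T. 0 \<le> T \<Longrightarrow> continuous_on {0..T} z"
    and init: "\<And>j. \<bar>z 0 $ j\<bar> < b $ j"
    and improve: "\<And>t j. 0 \<le> t \<Longrightarrow> (\<And>s j. s \<in> {0..t} \<Longrightarrow> \<bar>z s $ j\<bar> \<le> b $ j)
                    \<Longrightarrow> \<bar>z t $ j\<bar> < b $ j"
    and t: "0 \<le> t"
  shows "\<bar>z t $ i\<bar> < b $ i"
proof (rule ccontr)
  assume exit: "\<not> \<bar>z t $ i\<bar> < b $ i"
  have z_cont: "continuous_on {0..T} (\<lambda>s. \<bar>z s $ j\<bar>)" if "0 \<le> T" for T j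
    by (intro continuous_on_rabs continuous_on_vec_nth_comp cont that)
  define S where "S = (\<Union>j. {0..t} \<inter> (\<lambda>s. \<bar>z s $ j\<bar>) -` {b $ j..})"
  have S_iff: "s \<in> S \<longleftrightarrow> s \<in> {0..t} \<and> (\<exists>j. b $ j \<le> \<bar>z s $ j\<bar>)" for s
    by (auto simp: S_def)
  have "closed S"
    unfolding S_def
    by (intro closed_Union finite_imageI finite ballI) (auto intro!: continuous_closed_preimage z_cont t)
  moreover have "t \<in> S"
    using t exit by (force simp: S_iff not_less)
  then have "S \<noteq> {}" by auto
  moreover have S_bdd: "bdd_below S"
    by (auto simp: S_iff intro!: bdd_belowI[of _ 0])
  ultimately have "Inf S \<in> S"
    by (intro closed_contains_Inf)
  then obtain j where T: "0 \<le> Inf S" "Inf S \<le> t" and exit_j: "b $ j \<le> \<bar>z (Inf S) $ j\<bar>"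
    by (auto simp: S_iff)
  have "Inf S \<noteq> 0"
    using init[of j] exit_j by auto
  with T have T_pos: "0 < Inf S" by simp
  have before: "\<bar>z s $ j'\<bar> < b $ j'" if "s \<in> {0..<Inf S}" for s j'
    using that cInf_lower[OF _ S_bdd, of s] T by (force simp: S_iff not_less)
  have "\<bar>z s $ j'\<bar> \<le> b $ j'" if "s \<in> {0..Inf S}" for s j'
  proof -
    have "closed ({0..Inf S} \<inter> (\<lambda>s. \<bar>z s $ j'\<bar>) -` {..b $ j'})"
      by (intro continuous_closed_preimage z_cont T) auto
    moreover have "{0..<Inf S} \<subseteq> {0..Inf S} \<inter> (\<lambda>s. \<bar>z s $ j'\<bar>) -` {..b $ j'}"
      using before by (auto simp: less_imp_le)
    ultimately have "closure {0..<Inf S} \<subseteq> {0..Inf S} \<inter> (\<lambda>s. \<bar>z s $ j'\<bar>) -` {..b $ j'}"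
      by (rule closure_minimal[rotated])
    then show ?thesis
      using that T_pos by auto
  qed
  with improve[OF T(1)] exit_j show False
    by (meson not_less)
qed

definition lure_rhs ::
  "real^'N^'N \<Rightarrow> real^'n^'N \<Rightarrow> real^'l^'N \<Rightarrow> real^'N^'l \<Rightarrow> real^'l
   \<Rightarrow> (real \<Rightarrow> real^'n) \<Rightarrow> (real \<Rightarrow> real^'N) \<Rightarrow> real \<Rightarrow> real^'N" where
  "lure_rhs A Bu Bv Cz phis u x s = A *v x s + Bv *v psi phis (Cz *v x s) + Bu *v u s"

lemma lure_solutionD:
  assumes "lure_solution A Bu Bv Cz phis u x" and "0 \<le> t"
  shows "x 0 = 0"
    and "lure_rhs A Bu Bv Cz phis u x absolutely_integrable_on {0..t}"
    and "x t = integral {0..t} (lure_rhs A Bu Bv Cz phis u x)"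
  using assms by (auto simp: lure_solution_def lure_rhs_def[abs_def] intro: integral_unique[symmetric])

lemma lure_solution_continuous:
  assumes "lure_solution A Bu Bv Cz phis u x" and "0 \<le> T"
  shows "continuous_on {0..T} x"
proof (rule continuous_on_eq[OF indefinite_integral_continuous_1])
  show "lure_rhs A Bu Bv Cz phis u x integrable_on {0..T}"
    using lure_solutionD(2)[OF assms] set_lebesgue_integral_eq_integral(1) by blast
qed (use lure_solutionD(3)[OF assms(1)] in auto)

lemma continuous_on_psi: "continuous_on S (psi phis)"
  unfolding psi_def by (intro continuous_on_vec_lambda continuous_intros)

lemma lure_rhs_measurable:
  fixes x :: "real \<Rightarrow> real^'N" and u :: "real \<Rightarrow> real^'n"
  assumes u: "u \<in> borel_measurable (restrict_space lborel {0..})" and x: "continuous_on {0..t} x"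
  shows "(\<lambda>s. indicator {0..t} s * lure_rhs A Bu Bv Cz phis u x s $ b) \<in> borel_measurable lborel"
proof -
  have "continuous_on {0..t} (\<lambda>s. A *v x s + Bv *v psi phis (Cz *v x s))"
    by (intro continuous_on_add continuous_on_compose2[OF matrix_vector_mult_linear_continuous_on]
        continuous_on_compose2[OF continuous_on_psi] x) auto
  then have "(\<lambda>s. A *v x s + Bv *v psi phis (Cz *v x s)) \<in> borel_measurable (restrict_space lborel {0..t})"
    by (simp add: borel_measurable_continuous_on_restrict
        measurable_cong_sets[OF sets_restrict_space_cong[OF sets_lborel] refl])
  moreover have "(\<lambda>s. Bu *v u s) \<in> borel_measurable (restrict_space lborel {0..t})"
    using measurable_restrict_mono[OF u, of "{0..t}"]
    by (intro measurable_compose[OF _ borel_measurable_continuous_onI[OF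
          matrix_vector_mult_linear_continuous_on]]) auto
  ultimately have "lure_rhs A Bu Bv Cz phis u x \<in> borel_measurable (restrict_space lborel {0..t})"
    unfolding lure_rhs_def[abs_def] by (rule borel_measurable_add)
  then have "(\<lambda>s. indicator {0..t} s *\<^sub>R lure_rhs A Bu Bv Cz phis u x s) \<in> borel_measurable lborel"
    by (subst (asm) borel_measurable_restrict_space_iff) auto
  then show ?thesis
    using borel_measurable_vec_nth_comp[where i=b] by fastforce
qed

lemma lure_variation_of_constants:
  assumes u: "u \<in> borel_measurable (restrict_space lborel {0..})"
    and sol: "lure_solution A Bu Bv Cz phis u x" and t: "0 \<le> t"
  shows "((\<lambda>s. (mat_exp ((t - s) *\<^sub>R A) *v (Bu *v u s + Bv *v psi phis (Cz *v x s))) $ a)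
           has_integral x t $ a) {0..t}"
proof -
  have "lure_rhs A Bu Bv Cz phis u x s - A *v x s = Bu *v u s + Bv *v psi phis (Cz *v x s)" for s
    by (simp add: lure_rhs_def)
  with variation_of_constants[OF t lure_solutionD(2)[OF sol t]
      lure_rhs_measurable[OF u lure_solution_continuous[OF sol t]], of x A a]
  show ?thesis
    using lure_solutionD(3)[OF sol] by simp
qed

lemma measurable_lebesgue_on_of_restrict_lborel:
  assumes "u \<in> borel_measurable (restrict_space lborel {0..})"
  shows "u \<in> borel_measurable (lebesgue_on {0..t})"
proof (rule borel_measurable_subalgebra)
  show "u \<in> borel_measurable (restrict_space lborel {0..t})"
    by (rule measurable_restrict_mono[OF assms]) auto
  show "sets (restrict_space lborel {0..t}) \<subseteq> sets (lebesgue_on {0..t})"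
    by (metis mono_restrict_space sets_completionI_sets subsetI)
qed (auto simp: space_restrict_space)

lemma lure_output_le_gain:
  fixes C :: "real^'N^'m"
  assumes hu: "\<And>p q. (\<lambda>\<tau>. impulse C A Bu \<tau> $ p $ q) absolutely_integrable_on {0..}"
    and hv: "\<And>p q. (\<lambda>\<tau>. impulse C A Bv \<tau> $ p $ q) absolutely_integrable_on {0..}"
    and u: "u \<in> borel_measurable (restrict_space lborel {0..})" and u_le: "linf_le u ubar"
    and sol: "lure_solution A Bu Bv Cz phis u x"
    and zbar: "\<And>j. 0 < zbar $ j" and t: "0 \<le> t"
    and z_le: "\<And>s j. s \<in> {0..t} \<Longrightarrow> \<bar>(Cz *v x s) $ j\<bar> \<le> zbar $ j"
  shows "\<bar>(C *v x t) $ i\<bar> \<le> (gain C A Bu *v ubar + gain C A Bv *v (gamma_psi phis zbar *v zbar)) $ i"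
proof (rule abs_output_le_gain[OF t hu hv])
  show "(\<lambda>s. u s $ q) \<in> borel_measurable (lebesgue_on {0..t})" for q
    by (intro borel_measurable_vec_nth_comp measurable_lebesgue_on_of_restrict_lborel u)
  have "continuous_on {0..t} (\<lambda>s. psi phis (Cz *v x s))"
    by (intro continuous_on_compose2[OF continuous_on_psi]
        continuous_on_compose2[OF matrix_vector_mult_linear_continuous_on]
        lure_solution_continuous[OF sol t]) auto
  then show "(\<lambda>s. psi phis (Cz *v x s) $ q) \<in> borel_measurable (lebesgue_on {0..t})" for q
    by (intro continuous_imp_measurable_on_sets_lebesgue continuous_on_vec_nth_comp) auto
  show "\<bar>u s $ q\<bar> \<le> ubar $ q" if "s \<in> {0..t}" for s q
    using linf_leD[OF u_le] that by simp
  show "\<bar>psi phis (Cz *v x s) $ q\<bar> \<le> (gamma_psi phis zbar *v zbar) $ q" if "s \<in> {0..t}" for s q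
    by (intro abs_psi_le_gamma_psi zbar z_le that)
  show "((\<lambda>s. (impulse C A Bu (t - s) *v u s) $ i + (impulse C A Bv (t - s) *v psi phis (Cz *v x s)) $ i)
      has_integral (C *v x t) $ i) {0..t}"
    by (intro has_integral_output_convolution lure_variation_of_constants[OF u sol t])
qed

theorem theorem3:
  fixes A :: "real^'N^'N" and Bu :: "real^'n^'N" and Bv :: "real^'l^'N"
    and Cy :: "real^'N^'m" and Cz :: "real^'N^'l" and phis :: "real^'l"
    and ybar :: "real^'m" and ubar :: "real^'n" and zbar :: "real^'l"
  assumes int_yu: "\<And>p q. (\<lambda>t. impulse Cy A Bu t $ p $ q) absolutely_integrable_on {0..}"
    and int_yv: "\<And>p q. (\<lambda>t. impulse Cy A Bv t $ p $ q) absolutely_integrable_on {0..}"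
    and int_zu: "\<And>p q. (\<lambda>t. impulse Cz A Bu t $ p $ q) absolutely_integrable_on {0..}"
    and int_zv: "\<And>p q. (\<lambda>t. impulse Cz A Bv t $ p $ q) absolutely_integrable_on {0..}"
    and ubar_nonneg: "\<forall>i. 0 \<le> ubar $ i"
    and zbar_pos: "\<forall>i. 0 < zbar $ i"
    and cond1: "\<forall>i. (gain Cz A Bu *v ubar) $ i
                  < ((mat 1 - gain Cz A Bv ** gamma_psi phis zbar) *v zbar) $ i"
    and cond2: "\<forall>i. (gain Cy A Bu *v ubar + gain Cy A Bv *v (gamma_psi phis zbar *v zbar)) $ i
                  \<le> ybar $ i"
  shows "\<forall>u x. u \<in> borel_measurable (restrict_space lborel {0..}) \<longrightarrow> linf_le u ubar \<longrightarrow>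
           lure_solution A Bu Bv Cz phis u x \<longrightarrow>
           linf_le (\<lambda>t. Cz *v x t) zbar \<and> linf_le (\<lambda>t. Cy *v x t) ybar"
proof (intro allI impI)
  fix u :: "real \<Rightarrow> real^'n" and x :: "real \<Rightarrow> real^'N"
  assume u: "u \<in> borel_measurable (restrict_space lborel {0..})" and u_le: "linf_le u ubar"
    and sol: "lure_solution A Bu Bv Cz phis u x"
  have zbar: "\<And>j. 0 < zbar $ j"
    using zbar_pos by simp
  note output_le = lure_output_le_gain[OF _ _ u u_le sol zbar]
  have margin: "(gain Cz A Bu *v ubar + gain Cz A Bv *v (gamma_psi phis zbar *v zbar)) $ j < zbar $ j" for j
    using cond1[rule_format, of j]
    by (simp add: matrix_vector_mult_diff_rdistrib matrix_vector_mul_assoc[symmetric])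
  have z_lt: "\<bar>(Cz *v x t) $ i\<bar> < zbar $ i" if "0 \<le> t" for t i
  proof (rule strict_box_bound_persists[OF _ _ _ that])
    show "continuous_on {0..T} (\<lambda>t. Cz *v x t)" if "0 \<le> T" for T
      by (intro continuous_on_compose2[OF matrix_vector_mult_linear_continuous_on]
          lure_solution_continuous[OF sol that]) auto
    show "\<bar>(Cz *v x 0) $ j\<bar> < zbar $ j" for j
      using zbar lure_solutionD(1)[OF sol order_refl] by simp
    show "\<bar>(Cz *v x t) $ j\<bar> < zbar $ j"
      if "0 \<le> t" "\<And>s j. s \<in> {0..t} \<Longrightarrow> \<bar>(Cz *v x s) $ j\<bar> \<le> zbar $ j" for t j
      by (rule le_less_trans[OF output_le[OF int_zu int_zv] margin]) (use that in auto)
  qed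
  have y_le: "\<bar>(Cy *v x t) $ i\<bar> \<le> ybar $ i" if "0 \<le> t" for t i
    by (rule order_trans[OF output_le[OF int_yu int_yv] cond2[rule_format]])
       (use that z_lt in \<open>auto intro: less_imp_le\<close>)
  show "linf_le (\<lambda>t. Cz *v x t) zbar \<and> linf_le (\<lambda>t. Cy *v x t) ybar"
    using z_lt y_le by (simp add: linf_leI less_imp_le)
qed

end
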